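(* If $n$ is a non-negative integer, then $$\sum_{k = 1}^n \sum_{j = 0}^{k - 1} \frac{( - 1)^j }{n - j}\binom{n}{j}^3 = \begin{cases} ( - 1)^{n/2} \binom{n}{n/2}\binom{3n/2}{n}-1,&\text{if $n$ is even;} \\ 1,&\text{if $n$ is odd.} \end{cases}$$
   Context: Empty sums are zero. *)

theory Defs
  imports Complex_Main
begin

end

theory Submission
  imports Defs
begin

(* Counting how often each inner term occurs, the double sum equals
   \<Sum>_{j<n} (-1)^j (n choose j)^3, i.e. the full alternating sum of cubes minus its
   last term (-1)^n.  For odd n the full sum vanishes by the symmetry j \<leftrightarrow> n - j.
   For n = 2m it is Dixon's identity \<Sum>_j (-1)^j (2m choose j)^3 = (-1)^m (3m)! / m!^3,
   proved by creative telescoping: a rational certificate shows termwise that the sums S m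
   satisfy (m+1)^2 S (m+1) + 3(3m+1)(3m+2) S m = 0, a recurrence also satisfied by
   (-1)^m (3m)! / m!^3.  Finally (3m)! / m!^3 = (2m choose m) (3m choose 2m). *)

lemma sum_nested_prefix_sums:
  fixes g :: "nat \<Rightarrow> 'a::comm_semiring_1"
  shows "(\<Sum>k=1..n. \<Sum>j=0..k-1. g j) = (\<Sum>j<n. of_nat (n - j) * g j)"
proof (induction n)
  case (Suc n)
  have "(\<Sum>k=1..Suc n. \<Sum>j=0..k-1. g j)
      = (\<Sum>j<n. of_nat (n - j) * g j) + (\<Sum>j<Suc n. g j)"
    using Suc by (simp add: atLeast0AtMost lessThan_Suc_atMost)
  also have "\<dots> = (\<Sum>j<Suc n. of_nat (Suc n - j) * g j)"
    by (simp add: sum.distrib[symmetric] Suc_diff_le algebra_simps)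
  finally show ?case .
qed simp

lemma alternating_sum_binomial_powers_odd:
  assumes "odd n"
  shows "(\<Sum>j\<le>n. (-1)^j * of_nat (n choose j) ^ p :: 'a::linordered_idom) = 0"
proof -
  let ?S = "\<Sum>j\<le>n. (-1)^j * of_nat (n choose j) ^ p :: 'a"
  have "?S = (\<Sum>j\<le>n. (-1)^(n - j) * of_nat (n choose (n - j)) ^ p)"
    by (subst sum.atLeastAtMost_rev[of _ 0 n, simplified atLeast0AtMost]) simp
  also have "\<dots> = (\<Sum>j\<le>n. - ((-1)^j * of_nat (n choose j) ^ p))"
  proof (intro sum.cong refl)
    fix j assume "j \<in> {..n}"
    then have "(-1 :: 'a)^(n - j) = - ((-1)^j)" and "n choose (n - j) = n choose j"
      using assms
      by (auto simp: binomial_symmetric[symmetric] power_add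
          neg_one_power_add_eq_neg_one_power_diff[symmetric])
    then show "(-1)^(n - j) * of_nat (n choose (n - j)) ^ p
        = - ((-1)^j * of_nat (n choose j) ^ p :: 'a)"
      by simp
  qed
  also have "\<dots> = - ?S" by (simp add: sum_negf)
  finally show ?thesis by simp
qed

lemma of_nat_binomial_absorb_comp:
  "of_nat (Suc n choose k) * (of_nat (Suc n) - of_nat k)
     = (of_nat (Suc n) * of_nat (n choose k) :: 'a::comm_ring_1)"
proof (cases "k \<le> Suc n")
  case True
  have "(Suc n - k) * (Suc n choose k) = Suc n * (n choose k)"
    using binomial_absorb_comp[of "Suc n" k] by (simp only: diff_Suc_1)
  then have "of_nat ((Suc n - k) * (Suc n choose k)) = (of_nat (Suc n * (n choose k)) :: 'a)"
    by (rule arg_cong)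
  then show ?thesis
    using True by (simp only: of_nat_mult of_nat_diff mult.commute)
qed (simp add: binomial_eq_0)

lemma of_nat_binomial_Suc_times:
  "of_nat (n choose Suc k) * of_nat (Suc k)
     = (of_nat (n choose k) * (of_nat n - of_nat k) :: 'a::comm_ring_1)"
proof (cases n)
  case (Suc m)
  have "Suc k * (Suc m choose Suc k) = Suc m * (m choose k)"
    by (rule Suc_times_binomial)
  then have "of_nat (n choose Suc k) * of_nat (Suc k)
      = (of_nat (Suc m) * of_nat (m choose k) :: 'a)"
    unfolding Suc by (metis mult.commute of_nat_mult)
  then show ?thesis
    unfolding Suc of_nat_binomial_absorb_comp[symmetric] .
qed (cases k, simp_all)

(* Zeilberger's algorithm applied to the summand (-1)^j (2n choose j)^3 returns the
   certificate dixon_certificate below; this is its polynomial part. *)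
definition dixon_certificate_poly :: "real \<Rightarrow> real \<Rightarrow> real" where
  "dixon_certificate_poly n j = 58 - 207/2*j + 147/2*j^2 - 24*j^3 + 3*j^4
     + n*(392 - 1113/2*j + 297*j^2 - 66*j^3 + 9/2*j^4)
     + n^2*(1042 - 1107*j + 396*j^2 - 45*j^3) + n^3*(1364 - 966*j + 174*j^2)
     + n^4*(880 - 312*j) + 224*n^5"

lemma dixon_certificate_poly_identity:
  "(n+1)^2 * ((2*n+2)*(2*n+1))^3 + 3*(3*n+1)*(3*n+2) * ((2*n+2-j)*(2*n+1-j))^3
     = (2*n+2-j)^3 * dixon_certificate_poly n (j+1) + j^3 * dixon_certificate_poly n j"
  unfolding dixon_certificate_poly_def by algebra

definition dixon_term :: "nat \<Rightarrow> nat \<Rightarrow> real" where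
  "dixon_term n j = (-1)^j * real (2*n choose j)^3"

definition dixon_certificate :: "nat \<Rightarrow> nat \<Rightarrow> real" where
  "dixon_certificate n j =
     - dixon_term (Suc n) j * (real j / ((2*real n+2)*(2*real n+1)))^3 * dixon_certificate_poly n j"

lemma dixon_term_creative_telescoping:
  "(real n+1)^2 * dixon_term (Suc n) j + 3*(3*real n+1)*(3*real n+2) * dixon_term n j
     = dixon_certificate n (Suc j) - dixon_certificate n j"
proof -
  define N where "N = real n"
  define x where "x = real j"
  define B where "B = real (2*n+2 choose j)"
  define s where "s = ((-1::real)^j)"
  define M where "M = (2*N+2)*(2*N+1)"
  have "M > 0" unfolding M_def N_def by simp
  have "B * (2*N+2-x) * (2*N+1-x) = M * real (2*n choose j)"
    using of_nat_binomial_absorb_comp[of "2*n+1" j, where 'a=real]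
      of_nat_binomial_absorb_comp[of "2*n" j, where 'a=real]
    unfolding B_def M_def N_def x_def by (simp add: algebra_simps)
  then have term_n: "dixon_term n j = s * (B * (2*N+2-x) * (2*N+1-x) / M)^3"
    using \<open>M > 0\<close> unfolding dixon_term_def s_def by simp
  have term_Suc_n: "dixon_term (Suc n) j = s * B^3"
    unfolding dixon_term_def s_def B_def by simp
  have binom_Suc_j: "real (2 * Suc n choose Suc j) * (x+1) = B * (2*N+2-x)"
    using of_nat_binomial_Suc_times[of "2*n+2" j, where 'a=real]
    unfolding B_def N_def x_def by (simp del: binomial_Suc_Suc add: algebra_simps)
  have "dixon_certificate n (Suc j)
      = s * (real (2 * Suc n choose Suc j) * (x+1))^3 / M^3 * dixon_certificate_poly N (x+1)"
    unfolding dixon_certificate_def dixon_term_def s_def M_def N_def x_def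
    by (simp del: binomial_Suc_Suc add: power_divide power_mult_distrib add.commute)
  then have cert_Suc_j:
    "dixon_certificate n (Suc j) = s * (B * (2*N+2-x))^3 / M^3 * dixon_certificate_poly N (x+1)"
    unfolding binom_Suc_j .
  have cert_j: "dixon_certificate n j = - s * B^3 * x^3 / M^3 * dixon_certificate_poly N x"
    unfolding dixon_certificate_def term_Suc_n M_def N_def x_def by (simp add: power_divide)
  have "(N+1)^2 * (s * B^3) + 3*(3*N+1)*(3*N+2) * (s * (B * (2*N+2-x) * (2*N+1-x) / M)^3)
      = s * B^3 / M^3 * ((N+1)^2 * M^3 + 3*(3*N+1)*(3*N+2) * ((2*N+2-x)*(2*N+1-x))^3)"
    using \<open>M > 0\<close> unfolding power_divide power_mult_distrib by (simp add: field_simps)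
  also have "\<dots> = s * B^3 / M^3
      * ((2*N+2-x)^3 * dixon_certificate_poly N (x+1) + x^3 * dixon_certificate_poly N x)"
    unfolding M_def dixon_certificate_poly_identity ..
  also have "\<dots> = s * (B * (2*N+2-x))^3 / M^3 * dixon_certificate_poly N (x+1)
      - (- s * B^3 * x^3 / M^3 * dixon_certificate_poly N x)"
    unfolding power_mult_distrib by (simp add: algebra_simps)
  finally show ?thesis
    unfolding term_n term_Suc_n cert_Suc_j cert_j N_def .
qed

lemma dixon_sum_recurrence:
  "(real n+1)^2 * (\<Sum>j\<le>2*Suc n. dixon_term (Suc n) j)
     + 3*(3*real n+1)*(3*real n+2) * (\<Sum>j\<le>2*n. dixon_term n j) = 0"
proof -
  have extend: "(\<Sum>j<2*n+3. dixon_term k j) = (\<Sum>j\<le>2*k. dixon_term k j)"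
    if "k \<le> Suc n" for k
    using that by (intro sum.mono_neutral_right) (auto simp: dixon_term_def)
  have "(\<Sum>j<2*n+3. (real n+1)^2 * dixon_term (Suc n) j
        + 3*(3*real n+1)*(3*real n+2) * dixon_term n j)
      = (\<Sum>j<2*n+3. dixon_certificate n (Suc j) - dixon_certificate n j)"
    by (intro sum.cong refl dixon_term_creative_telescoping)
  also have "\<dots> = dixon_certificate n (2*n+3) - dixon_certificate n 0"
    by (rule sum_lessThan_telescope)
  also have "\<dots> = 0"
    by (simp add: dixon_certificate_def dixon_term_def)
  finally show ?thesis
    by (simp only: sum.distrib sum_distrib_left[symmetric] extend le_refl le_SucI)
qed

lemma fact_triple_div_cube_Suc:
  "(real m + 1)^2 * (fact (3 * Suc m) / fact (Suc m) ^ 3)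
     = 3*(3*real m+1)*(3*real m+2) * (fact (3*m) / fact m ^ 3 :: real)"
proof -
  have fact_3_Suc:
    "fact (3 * Suc m) = 3*(real m+1)*(3*real m+2)*(3*real m+1) * (fact (3*m) :: real)"
    by (simp add: numeral_3_eq_3 algebra_simps)
  have fact_Suc_cube: "fact (Suc m) ^ 3 = (real m + 1)^3 * (fact m ^ 3 :: real)"
    by (simp add: power_mult_distrib add.commute)
  show ?thesis
    unfolding fact_3_Suc fact_Suc_cube
    by (simp add: divide_simps) (simp add: algebra_simps power2_eq_square power3_eq_cube)
qed

theorem dixon_identity_cubes:
  "(\<Sum>j\<le>2*m. (-1)^j * real (2*m choose j)^3) = (-1)^m * (fact (3*m) / fact m ^ 3)"
proof (induction m)
  case (Suc m)
  have IH: "(\<Sum>j\<le>2*m. dixon_term m j) = (-1)^m * (fact (3*m) / fact m ^ 3)"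
    using Suc unfolding dixon_term_def .
  have "(real m+1)^2 * (\<Sum>j\<le>2*Suc m. dixon_term (Suc m) j)
      = - (3*(3*real m+1)*(3*real m+2) * ((-1)^m * (fact (3*m) / fact m ^ 3)))"
    using dixon_sum_recurrence[of m] unfolding IH by linarith
  also have "\<dots> = - ((-1)^m * ((real m+1)^2 * (fact (3 * Suc m) / fact (Suc m) ^ 3)))"
    unfolding fact_triple_div_cube_Suc by (simp only: mult.left_commute)
  also have "\<dots> = (real m+1)^2 * ((-1)^Suc m * (fact (3 * Suc m) / fact (Suc m) ^ 3))"
    by (simp only: power_Suc mult_minus1 mult_minus_left mult_minus_right mult.left_commute)
  finally have "(\<Sum>j\<le>2*Suc m. dixon_term (Suc m) j)
      = (-1)^Suc m * (fact (3 * Suc m) / fact (Suc m) ^ 3)"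
    by (rule mult_left_cancel[THEN iffD1, rotated]) simp
  then show ?case
    by (simp only: dixon_term_def)
qed simp

lemma binomial_central_times_binomial:
  "of_nat (2*m choose m) * of_nat (3*m choose (2*m))
     = (fact (3*m) / fact m ^ 3 :: 'a::field_char_0)"
proof -
  have "of_nat (2*m choose m) * of_nat (3*m choose (2*m))
      = fact (2*m) / (fact m * fact m) * (fact (3*m) / (fact (2*m) * fact m) :: 'a)"
    by (simp add: binomial_fact)
  then show ?thesis
    by (simp add: power3_eq_cube)
qed

theorem proposition18:
  fixes n :: nat
  shows "(\<Sum>k=1..n. \<Sum>j=0..k-1. (-1)^j / real (n - j) * real (n choose j) ^ 3) =
    (if even n then (-1)^(n div 2) * real (n choose (n div 2)) * real ((3 * n div 2) choose n) - 1
     else 1)"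
proof -
  have "(\<Sum>k=1..n. \<Sum>j=0..k-1. (-1)^j / real (n - j) * real (n choose j) ^ 3)
      = (\<Sum>j<n. (-1)^j * real (n choose j) ^ 3)"
    unfolding sum_nested_prefix_sums by (intro sum.cong) auto
  also have "\<dots> = (\<Sum>j\<le>n. (-1)^j * real (n choose j) ^ 3) - (-1)^n"
    by (simp add: lessThan_Suc_atMost[symmetric])
  finally have reduced:
    "(\<Sum>k=1..n. \<Sum>j=0..k-1. (-1)^j / real (n - j) * real (n choose j) ^ 3)
      = (\<Sum>j\<le>n. (-1)^j * real (n choose j) ^ 3) - (-1)^n" .
  show ?thesis
  proof (cases "even n")
    case True
    then obtain m where "n = 2*m" by blast
    then show ?thesis
      using reduced dixon_identity_cubes[of m] binomial_central_times_binomial[of m, where 'a=real]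
      by (simp add: mult.assoc)
  next
    case False
    then show ?thesis
      using reduced alternating_sum_binomial_powers_odd[of n 3] by simp
  qed
qed

end
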